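(* Let $\widetilde V$ be a real Hilbert space with inner product $M(\cdot,\cdot)$ and norm $\|\cdot\|_M$. Let $N(\cdot,\cdot)$ be a symmetric positive semi-definite bilinear form on $\widetilde V$ with seminorm $\|\cdot\|_N$, and assume $\|\cdot\|_N$ is compact with respect to $\|\cdot\|_M$ (every $\|\cdot\|_M$-bounded sequence in $\widetilde V$ has a subsequence that is Cauchy in $\|\cdot\|_N$). Let $V$ and $V_h$ be closed linear subspaces of $\widetilde V$, with $V_h$ finite-dimensional. Let $\lambda_1\le\lambda_2\le\cdots$ ($d$ of them, $d\in\mathbb N\cup\{\infty\}$) and $0<\lambda_{h,1}\le\cdots\le\lambda_{h,n}$ be the eigenvalues defined in the context, and let $P_h:\widetilde V\to V_h$ be the $M$-orthogonal projection. Suppose there exists a positive constant $C_h$ such that $$\|u-P_hu\|_N\le C_h\|u-P_hu\|_M\quad\forall u\in V.$$ Then $$\lambda_k\ge\frac{\lambda_{h,k}}{1+C_h^2\lambda_{h,k}},\qquad k=1,2,\ldots,\min(n,d).$$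
   Context: Define $\mathcal K:V\to V$ by $M(\mathcal Kf,v)=N(f,v)$ for all $v\in V$; then $\mathrm{Ker}(\mathcal K)=\{v\in V: N(v,v)=0\}$. Let $\mathrm{Ker}(\mathcal K)^\perp$ be its $M$-orthogonal complement in $V$ and $d=\dim \mathrm{Ker}(\mathcal K)^\perp$ (possibly infinite). The eigenvalues $\lambda_k$ ($k=1,\ldots,d$, increasing, repeated according to multiplicity) are those of the problem: find $(\lambda,u)\in\mathbb R\times \mathrm{Ker}(\mathcal K)^\perp$ with $M(u,v)=\lambda N(u,v)$ for all $v\in\mathrm{Ker}(\mathcal K)^\perp$ (equivalently $\lambda_k=\mu_k^{-1}$ where $\mu_1\ge\mu_2\ge\cdots>0$ are the nonzero eigenvalues of the compact self-adjoint operator $\mathcal K$). Analogously, $\mathrm{Ker}(\mathcal K_h)=\{v_h\in V_h:N(v_h,v_h)=0\}$, $\mathrm{Ker}(\mathcal K_h)^\perp$ is its $M$-orthogonal complement in $V_h$, $n=\dim\mathrm{Ker}(\mathcal K_h)^\perp$, and $0<\lambda_{h,1}\le\cdots\le\lambda_{h,n}$ are the eigenvalues of: find $(\lambda_h,u_h)\in\mathbb R\times\mathrm{Ker}(\mathcal K_h)^\perp$ with $M(u_h,v_h)=\lambda_hN(u_h,v_h)$ for all $v_h\in\mathrm{Ker}(\mathcal K_h)^\perp$. The projection $P_h$ is defined by $M(u-P_hu,v_h)=0$ for all $v_h\in V_h$. *)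

theory Defs
  imports "HOL-Analysis.Analysis"
begin

text \<open>The ambient Hilbert space is a type of class real_inner + complete_space;
  the inner product M is the library inner product and the M-norm is norm.\<close>

definition seminormN :: "('a \<Rightarrow> 'a \<Rightarrow> real) \<Rightarrow> 'a \<Rightarrow> real" where
  "seminormN N u = sqrt (N u u)"

definition kerN :: "('a::real_inner \<Rightarrow> 'a \<Rightarrow> real) \<Rightarrow> 'a set \<Rightarrow> 'a set" where
  "kerN N W = {v \<in> W. N v v = 0}"

definition kerperp :: "('a::real_inner \<Rightarrow> 'a \<Rightarrow> real) \<Rightarrow> 'a set \<Rightarrow> 'a set" where
  "kerperp N W = {u \<in> W. \<forall>v \<in> kerN N W. inner u v = 0}"

definition eigpair :: "('a::real_inner \<Rightarrow> 'a \<Rightarrow> real) \<Rightarrow> 'a set \<Rightarrow> real \<Rightarrow> 'a \<Rightarrow> bool" where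
  "eigpair N W lam u \<longleftrightarrow> u \<in> kerperp N W \<and> u \<noteq> 0 \<and>
     (\<forall>v \<in> kerperp N W. inner u v = lam * N u v)"

text \<open>"dim S \<ge> k" for a possibly infinite-dimensional set: S contains k linearly
  independent vectors.\<close>
definition dim_ge :: "'a::real_vector set \<Rightarrow> nat \<Rightarrow> bool" where
  "dim_ge S k \<longleftrightarrow> (\<exists>B. B \<subseteq> S \<and> finite B \<and> card B = k \<and> independent B)"

text \<open>k-th eigenvalue (k = 1, 2, ...) in increasing order, repeated according to
  multiplicity: the least lam such that the eigenvectors with eigenvalue \<le> lam
  span a space of dimension \<ge> k.\<close>
definition eigval :: "('a::real_inner \<Rightarrow> 'a \<Rightarrow> real) \<Rightarrow> 'a set \<Rightarrow> nat \<Rightarrow> real" where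
  "eigval N W k = Inf {lam. dim_ge (span {u. \<exists>mu \<le> lam. eigpair N W mu u}) k}"

end

theory Submission
  imports Defs
begin

text \<open>By the min-max principle, lambda_k is the infimum of those lam for which
  M(v,v) \<le> lam N(v,v) holds on some k-dimensional subspace S of V; the principle follows by
  constructing eigenvectors as successive maximizers of N(u,u)/M(u,u), which exist because N is
  compact with respect to M. Given such S and lam with C_h^2 lam < 1, put v = P_h u for u in S.
  Orthogonality gives M(u,u) = M(v,v) + M(u - v, u - v), and the approximation property with the
  triangle inequality of the N-seminorm bounds N(u,u) by (|v|_N + C_h |u - v|_M)^2; eliminating
  u - v yields (1 - C_h^2 lam) M(v,v) \<le> lam N(v,v). So P_h is injective on S and P_h S is a
  k-dimensional subspace of V_h carrying the bound lam / (1 - C_h^2 lam), whence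
  lambda_(h,k) \<le> lam / (1 - C_h^2 lam), which rearranges to the claim.\<close>

section \<open>Real inequalities\<close>

lemma linear_coeff_zero_if_nonneg_quadratic:
  fixes a b :: real
  assumes nonneg: "\<And>t. 0 \<le> t * b + t\<^sup>2 * a"
  shows "b = 0"
proof (rule ccontr)
  assume "b \<noteq> 0"
  then have b2: "0 < b\<^sup>2" by simp
  define D where "D = \<bar>a\<bar> + 1"
  have D: "0 < D" "\<bar>a\<bar> < D" unfolding D_def by auto
  define t where "t = - b / D"
  have "t\<^sup>2 * \<bar>a\<bar> = b\<^sup>2 * (\<bar>a\<bar> / D) / D"
    unfolding t_def by (simp add: power_divide power2_eq_square)
  also have "\<dots> < b\<^sup>2 / D"
    using D b2 by (intro divide_strict_right_mono) (auto simp: divide_less_eq intro: mult_strict_left_mono)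
  finally have "t * b + t\<^sup>2 * \<bar>a\<bar> < 0"
    unfolding t_def by (simp add: power2_eq_square)
  moreover have "t * b + t\<^sup>2 * a \<le> t * b + t\<^sup>2 * \<bar>a\<bar>" by (simp add: mult_left_mono)
  ultimately show False using nonneg[of t] by linarith
qed

text \<open>With t = c^2 lam one has the identity
  (1 - t) (lam (p + c b)^2 - b^2) + (lam c p - (1 - t) b)^2 = lam p^2.\<close>

lemma completed_square_bound:
  fixes A b p c lam :: real
  assumes t: "c\<^sup>2 * lam < 1" and le: "A + b\<^sup>2 \<le> lam * (p + c * b)\<^sup>2"
  shows "(1 - c\<^sup>2 * lam) * A \<le> lam * p\<^sup>2"
proof -
  define t where "t = c\<^sup>2 * lam"
  have "(1 - t) * (A + b\<^sup>2) \<le> (1 - t) * (lam * (p + c * b)\<^sup>2)"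
    using le t unfolding t_def by (simp add: mult_left_mono)
  moreover have "(1 - t) * (lam * (p + c * b)\<^sup>2 - b\<^sup>2) + (lam * c * p - (1 - t) * b)\<^sup>2 = lam * p\<^sup>2"
    unfolding t_def by (simp add: power2_eq_square algebra_simps)
  moreover have "0 \<le> (lam * c * p - (1 - t) * b)\<^sup>2" by simp
  moreover have "(1 - t) * (A + b\<^sup>2) = (1 - t) * A + (1 - t) * b\<^sup>2"
    "(1 - t) * (lam * (p + c * b)\<^sup>2 - b\<^sup>2) = (1 - t) * (lam * (p + c * b)\<^sup>2) - (1 - t) * b\<^sup>2"
    by (simp_all add: distrib_left right_diff_distrib)
  ultimately show ?thesis unfolding t_def[symmetric] by linarith
qed

lemma Inf_frac_le_Inf:
  fixes A B :: "real set" and c :: real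
  assumes A: "A \<noteq> {}" and B: "B \<noteq> {}" "\<And>b. b \<in> B \<Longrightarrow> 0 \<le> b" and c: "0 < c"
    and transfer: "\<And>a. a \<in> A \<Longrightarrow> c * a < 1 \<Longrightarrow> a / (1 - c * a) \<in> B"
  shows "Inf B / (1 + c * Inf B) \<le> Inf A"
proof (rule cInf_greatest[OF A])
  fix a assume a: "a \<in> A"
  define l where "l = Inf B"
  have l: "0 \<le> l" unfolding l_def using B by (intro cInf_greatest) auto
  then have l_pos: "0 < 1 + c * l" using c by (simp add: add_pos_nonneg)
  have "l / (1 + c * l) \<le> a"
  proof (cases "c * a < 1")
    case True
    define G where "G = a / (1 - c * a)"
    have "l \<le> G" unfolding l_def G_def using B transfer[OF a True]
      by (intro cInf_lower) (auto intro!: bdd_belowI[of _ 0])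
    then have "l * (1 + c * G) \<le> G * (1 + c * l)" by (simp add: algebra_simps)
    then have "l / (1 + c * l) \<le> G / (1 + c * G)"
      using l_pos l \<open>l \<le> G\<close> c by (simp add: divide_le_eq le_divide_eq add_pos_nonneg)
    also have "\<dots> = a" unfolding G_def using True by (simp add: field_simps)
    finally show ?thesis .
  next
    case False
    have "l / (1 + c * l) \<le> 1 / c" using l_pos c by (simp add: divide_le_eq le_divide_eq)
    also have "\<dots> \<le> a" using False c by (simp add: divide_le_eq mult.commute)
    finally show ?thesis .
  qed
  then show "Inf B / (1 + c * Inf B) \<le> a" unfolding l_def .
qed

section \<open>Inner product spaces\<close>

lemma bilinear_inner: "bilinear (inner :: 'a::real_inner \<Rightarrow> 'a \<Rightarrow> real)"
  unfolding bilinear_def by (auto intro!: linearI simp: inner_add_left inner_add_right)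

lemma bilinear_sum_scaleR:
  fixes f :: "'a::real_vector \<Rightarrow> 'a \<Rightarrow> real"
  assumes "bilinear f"
  shows "f (\<Sum>y\<in>T. a y *\<^sub>R y) (\<Sum>y\<in>T. b y *\<^sub>R y) = (\<Sum>y\<in>T. \<Sum>y'\<in>T. a y * b y' * f y y')"
  by (simp add: bilinear_sum[OF assms] sum.cartesian_product bilinear_lmul[OF assms]
      bilinear_rmul[OF assms] case_prod_beta mult_ac)

lemma exists_orthogonal_in_span:
  fixes x :: "nat \<Rightarrow> 'a::real_inner"
  assumes B: "independent B" "finite B" "card B = k" and m: "m < k"
  obtains u where "u \<in> span B" "u \<noteq> 0" "\<And>i. i < m \<Longrightarrow> inner u (x i) = 0"
proof -
  define f where "f v = (\<Sum>i<m. inner v (x i) *\<^sub>R x i)" for v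
  have lin: "linear f" unfolding f_def
    by (intro linearI) (simp_all add: inner_add_left scaleR_add_left sum.distrib scaleR_sum_right)
  have "\<not> inj_on f (span B)"
  proof
    assume inj: "inj_on f (span B)"
    have "f ` B \<subseteq> span (x ` {..<m})"
    proof (rule image_subsetI)
      fix v show "f v \<in> span (x ` {..<m})"
        unfolding f_def by (intro span_sum span_scale) (auto intro: span_base)
    qed
    then have "card (f ` B) \<le> card (x ` {..<m})"
      using independent_span_bound linear_independent_injective_image[OF lin B(1) inj] by blast
    also have "\<dots> \<le> m" using card_image_le[of "{..<m}" x] by simp
    finally show False
      using card_image[OF inj_on_subset[OF inj span_superset]] B(3) m by simp
  qed
  then obtain u where u: "u \<in> span B" "u \<noteq> 0" "f u = 0"
    using linear_inj_on_iff_eq_0[OF lin subspace_span] by blast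
  have "(\<Sum>i<m. (inner u (x i))\<^sup>2) = inner u (f u)"
    unfolding f_def by (simp add: inner_sum_right power2_eq_square)
  then have "(inner u (x i))\<^sup>2 = 0" if "i < m" for i
    using u(3) that by (simp add: sum_nonneg_eq_0_iff)
  then show thesis using that u by simp
qed

lemma orthogonal_slice:
  fixes x :: "nat \<Rightarrow> 'a::real_inner"
  assumes "subspace W" "closed W"
  shows "subspace {w \<in> W. \<forall>i<m. inner w (x i) = 0}" and "closed {w \<in> W. \<forall>i<m. inner w (x i) = 0}"
proof -
  show "subspace {w \<in> W. \<forall>i<m. inner w (x i) = 0}"
    using assms(1) unfolding subspace_def by (auto simp: inner_add_left)
  have "{w \<in> W. \<forall>i<m. inner w (x i) = 0} = W \<inter> (\<Inter>i<m. {w. inner (x i) w = 0})"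
    by (auto simp: inner_commute)
  then show "closed {w \<in> W. \<forall>i<m. inner w (x i) = 0}"
    using assms(2) by (auto intro!: closed_Int closed_INT closed_hyperplane)
qed

lemma orthogonal_projection_unique:
  assumes S: "subspace S" and p: "p \<in> S" "\<forall>v\<in>S. inner (u - p) v = 0"
    and q: "q \<in> S" "\<forall>v\<in>S. inner (u - q) v = 0"
  shows "p = q"
proof -
  have "p - q \<in> S" using S p q by (simp add: subspace_diff)
  then have "inner ((u - q) - (u - p)) (p - q) = 0" using p q by (simp add: inner_diff_left)
  then show ?thesis by simp
qed

lemma orthogonal_projection_linear:
  assumes S: "subspace S" and P: "\<forall>u. P u \<in> S \<and> (\<forall>v\<in>S. inner (u - P u) v = 0)"
  shows "linear P"
proof (rule linearI)
  have orth: "inner (u - P u) v = 0" if "v \<in> S" for u v using P that by blast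
  fix a b r
  show "P (a + b) = P a + P b"
  proof (rule orthogonal_projection_unique[OF S])
    show "P (a + b) \<in> S" "P a + P b \<in> S" using P S by (auto intro: subspace_add)
    show "\<forall>v\<in>S. inner (a + b - P (a + b)) v = 0" using orth by blast
    have "a + b - (P a + P b) = (a - P a) + (b - P b)" by simp
    then show "\<forall>v\<in>S. inner (a + b - (P a + P b)) v = 0"
      using orth by (simp only: inner_add_left) simp
  qed
  show "P (r *\<^sub>R a) = r *\<^sub>R P a"
  proof (rule orthogonal_projection_unique[OF S])
    show "P (r *\<^sub>R a) \<in> S" "r *\<^sub>R P a \<in> S" using P S by (auto intro: subspace_scale)
    show "\<forall>v\<in>S. inner (r *\<^sub>R a - P (r *\<^sub>R a)) v = 0" using orth by blast
    have "r *\<^sub>R a - r *\<^sub>R P a = r *\<^sub>R (a - P a)" by (simp add: scaleR_diff_right)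
    then show "\<forall>v\<in>S. inner (r *\<^sub>R a - r *\<^sub>R P a) v = 0"
      using orth by (simp only: inner_scaleR_left) simp
  qed
qed

lemma kerperp_subspace: "subspace W \<Longrightarrow> subspace (kerperp N W)"
  unfolding subspace_def kerperp_def by (auto simp: inner_add_left)

lemma kerperp_subset: "kerperp N W \<subseteq> W"
  unfolding kerperp_def by auto

section \<open>Successive Rayleigh maximizers and Rayleigh levels\<close>

text \<open>The vectors x 0, x 1, ... maximize the Rayleigh quotient N(u,u)/M(u,u) successively,
  each over the M-orthogonal complement in W of its predecessors; the maxima mu j are the
  eigenvalues of the operator K, i.e. 1 / mu j is the (j+1)-th eigenvalue.\<close>

definition Rayleigh_maximizers ::
    "('a::real_inner \<Rightarrow> 'a \<Rightarrow> real) \<Rightarrow> 'a set \<Rightarrow> (nat \<Rightarrow> 'a) \<Rightarrow> (nat \<Rightarrow> real) \<Rightarrow> nat \<Rightarrow> bool" where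
  "Rayleigh_maximizers N W x mu k \<longleftrightarrow> (\<forall>j<k.
     x j \<in> W \<and> norm (x j) = 1 \<and> 0 < mu j \<and> (\<forall>i<j. inner (x j) (x i) = 0) \<and>
     (\<forall>v\<in>W. N (x j) v = mu j * inner (x j) v) \<and>
     (\<forall>u\<in>W. (\<forall>i<j. inner u (x i) = 0) \<longrightarrow> N u u \<le> mu j * (norm u)\<^sup>2))"

lemma Rayleigh_maximizers_0 [simp]: "Rayleigh_maximizers N W x mu 0"
  by (simp add: Rayleigh_maximizers_def)

lemma Rayleigh_maximizers_Suc:
  "Rayleigh_maximizers N W x mu (Suc m) \<longleftrightarrow> Rayleigh_maximizers N W x mu m \<and>
     x m \<in> W \<and> norm (x m) = 1 \<and> 0 < mu m \<and> (\<forall>i<m. inner (x m) (x i) = 0) \<and>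
     (\<forall>v\<in>W. N (x m) v = mu m * inner (x m) v) \<and>
     (\<forall>u\<in>W. (\<forall>i<m. inner u (x i) = 0) \<longrightarrow> N u u \<le> mu m * (norm u)\<^sup>2)"
  unfolding Rayleigh_maximizers_def less_Suc_eq by blast

lemma Rayleigh_maximizers_cong:
  assumes "\<And>i. i < k \<Longrightarrow> x' i = x i" "\<And>i. i < k \<Longrightarrow> mu' i = mu i"
  shows "Rayleigh_maximizers N W x' mu' k \<longleftrightarrow> Rayleigh_maximizers N W x mu k"
  using assms by (induction k) (simp_all add: Rayleigh_maximizers_Suc)

lemma Rayleigh_maximizers_extend:
  assumes IH: "Rayleigh_maximizers N W x mu m"
    and y: "y \<in> W" "norm y = 1" "0 < c" "\<forall>i<m. inner y (x i) = 0"
    and eig: "\<forall>v\<in>W. N y v = c * inner y v"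
    and max: "\<forall>w\<in>W. (\<forall>i<m. inner w (x i) = 0) \<longrightarrow> N w w \<le> c * (norm w)\<^sup>2"
  shows "Rayleigh_maximizers N W (x(m := y)) (mu(m := c)) (Suc m)"
proof -
  have upd: "(x(m := y)) i = x i" "(mu(m := c)) i = mu i" if "i < m" for i
    using that by simp_all
  have "Rayleigh_maximizers N W (x(m := y)) (mu(m := c)) m"
    using Rayleigh_maximizers_cong[of m "x(m := y)" x "mu(m := c)" mu] IH upd by blast
  moreover have "\<forall>i<m. inner y ((x(m := y)) i) = 0" using y(4) upd by simp
  moreover have "\<forall>w\<in>W. (\<forall>i<m. inner w ((x(m := y)) i) = 0) \<longrightarrow> N w w \<le> c * (norm w)\<^sup>2"
    using max upd by simp
  ultimately show ?thesis
    unfolding Rayleigh_maximizers_Suc fun_upd_same using y(1-3) eig by blast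
qed

lemma Rayleigh_maximizers_orthonormal:
  assumes "Rayleigh_maximizers N W x mu k" "i < k" "l < k"
  shows "inner (x i) (x l) = (if i = l then 1 else 0)"
proof -
  have "i < l \<or> l < i \<or> i = l" by auto
  then show ?thesis
    using assms unfolding Rayleigh_maximizers_def
    by (auto simp: inner_commute dot_square_norm)
qed

lemma Rayleigh_maximizers_independent:
  assumes "Rayleigh_maximizers N W x mu k"
  shows "independent (x ` {..<k})" and "card (x ` {..<k}) = k"
proof -
  note orthonormal = Rayleigh_maximizers_orthonormal[OF assms]
  have "pairwise orthogonal (x ` {..<k})"
    unfolding pairwise_def orthogonal_def using orthonormal by fastforce
  moreover have "0 \<notin> x ` {..<k}" using orthonormal by fastforce
  ultimately show "independent (x ` {..<k})" by (rule pairwise_orthogonal_independent)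
  have "inj_on x {..<k}"
    by (rule inj_onI) (metis lessThan_iff orthonormal zero_neq_one)
  then show "card (x ` {..<k}) = k" by (simp add: card_image)
qed

text \<open>By the min-max principle (eigval_minmax) the k-th eigenvalue is the infimum of the lam
  for which M(v,v) \<le> lam N(v,v) on some k-dimensional subspace span B of W.\<close>

definition Rayleigh_level :: "('a::real_inner \<Rightarrow> 'a \<Rightarrow> real) \<Rightarrow> 'a set \<Rightarrow> nat \<Rightarrow> real \<Rightarrow> bool" where
  "Rayleigh_level N W k lam \<longleftrightarrow> (\<exists>B. B \<subseteq> W \<and> finite B \<and> card B = k \<and> independent B \<and>
     (\<forall>v\<in>span B. inner v v \<le> lam * N v v))"

section \<open>Positive semi-definite forms\<close>

locale psd_form =
  fixes N :: "'a::real_inner \<Rightarrow> 'a \<Rightarrow> real"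
  assumes N_bilinear: "bilinear N"
    and N_commute: "N u v = N v u"
    and N_nonneg: "0 \<le> N u u"
begin

lemma linear_left: "linear (\<lambda>u. N u v)" and linear_right: "linear (N u)"
  using N_bilinear unfolding bilinear_def by auto

lemmas N_expand =
  bilinear_ladd[OF N_bilinear] bilinear_radd[OF N_bilinear]
  bilinear_lsub[OF N_bilinear] bilinear_rsub[OF N_bilinear]
  bilinear_lmul[OF N_bilinear] bilinear_rmul[OF N_bilinear]
  bilinear_lzero[OF N_bilinear] bilinear_rzero[OF N_bilinear]
  linear_sum[OF linear_left] linear_sum[OF linear_right]

lemma seminormN_sq [simp]: "(seminormN N u)\<^sup>2 = N u u"
  unfolding seminormN_def using N_nonneg by simp

lemma N_normalized: "N (u /\<^sub>R norm u) (u /\<^sub>R norm u) = N u u / (norm u)\<^sup>2"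
  by (simp add: N_expand power2_eq_square field_simps)

lemma null_right: "N b b = 0 \<Longrightarrow> N a b = 0"
proof -
  assume null: "N b b = 0"
  have "0 \<le> t * (2 * N a b) + t\<^sup>2 * N a a" for t
  proof -
    have "0 \<le> N (b + t *\<^sub>R a) (b + t *\<^sub>R a)" by (rule N_nonneg)
    also have "\<dots> = t * (2 * N a b) + t\<^sup>2 * N a a"
      using null by (simp add: N_expand N_commute[of b a] power2_eq_square algebra_simps)
    finally show ?thesis .
  qed
  then show "N a b = 0" using linear_coeff_zero_if_nonneg_quadratic by fastforce
qed

lemma Cauchy_Schwarz: "(N a b)\<^sup>2 \<le> N a a * N b b"
proof (cases "N b b = 0")
  case True
  then show ?thesis using null_right[of b a] N_nonneg by simp
next
  case False
  then have pos: "0 < N b b" using N_nonneg[of b] by simp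
  define t where "t = N a b / N b b"
  have "0 \<le> N (a - t *\<^sub>R b) (a - t *\<^sub>R b)" by (rule N_nonneg)
  also have "\<dots> = N a a - (N a b)\<^sup>2 / N b b"
    using pos unfolding t_def
    by (simp add: N_expand N_commute[of b a] field_simps power2_eq_square)
  finally show ?thesis using pos by (simp add: field_simps)
qed

lemma abs_N_le: "\<bar>N a b\<bar> \<le> seminormN N a * seminormN N b"
  using Cauchy_Schwarz[of a b] unfolding seminormN_def
  by (metis real_sqrt_abs real_sqrt_le_mono real_sqrt_mult)

lemma seminormN_triangle: "seminormN N (a + b) \<le> seminormN N a + seminormN N b"
proof -
  have "N (a + b) (a + b) \<le> (seminormN N a + seminormN N b)\<^sup>2"
    using abs_N_le[of a b] by (simp add: N_expand N_commute[of b a] power2_sum)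
  then show ?thesis
    unfolding seminormN_def by (intro real_le_lsqrt) (auto simp: N_nonneg)
qed

lemma kerperp_pos:
  assumes "u \<in> kerperp N W" "u \<noteq> 0"
  shows "0 < N u u"
proof (rule ccontr)
  assume "\<not> 0 < N u u"
  then have "u \<in> kerN N W" using assms N_nonneg[of u] unfolding kerperp_def kerN_def by simp
  then have "inner u u = 0" using assms(1) unfolding kerperp_def by blast
  then show False using assms(2) by simp
qed

lemma eigpair_Rayleigh:
  assumes "eigpair N W mu y"
  shows "inner y y = mu * N y y" and "0 < mu" and "0 < N y y"
proof -
  have y: "y \<in> kerperp N W" "y \<noteq> 0" and eq: "\<forall>v\<in>kerperp N W. inner y v = mu * N y v"
    using assms unfolding eigpair_def by auto
  show yy: "inner y y = mu * N y y" using eq y(1) by blast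
  have "0 < mu * N y y" using y(2) by (simp flip: yy)
  then show "0 < mu" and "0 < N y y"
    using N_nonneg[of y] by (auto simp: zero_less_mult_iff)
qed

lemma eigpair_N_orthogonal:
  assumes "eigpair N W mu y" "eigpair N W mu' y'" "mu \<noteq> mu'"
  shows "N y y' = 0"
proof -
  have "mu * N y y' = inner y y'"
    using assms(1,2) unfolding eigpair_def by simp
  also have "\<dots> = mu' * N y y'"
    using assms(1,2) unfolding eigpair_def by (simp add: inner_commute N_commute[of y])
  finally show ?thesis using assms(3) by simp
qed

text \<open>Eigenvectors for distinct eigenvalues are N-orthogonal, so on their span
  lam * N(v,v) - M(v,v) is the square N(z,z) of a reweighted combination z.\<close>

lemma Rayleigh_le_on_eigenspan:
  assumes "v \<in> span {u. \<exists>mu\<le>lam. eigpair N W mu u}"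
  shows "inner v v \<le> lam * N v v"
proof -
  obtain T c where T: "finite T" "T \<subseteq> {u. \<exists>mu\<le>lam. eigpair N W mu u}"
    and v: "v = (\<Sum>y\<in>T. c y *\<^sub>R y)"
    using assms unfolding span_explicit by blast
  define mu where "mu y = inner y y / N y y" for y
  have eig: "eigpair N W (mu y) y" "mu y \<le> lam" if "y \<in> T" for y
  proof -
    obtain m where "m \<le> lam" "eigpair N W m y" using T(2) \<open>y \<in> T\<close> by blast
    moreover have "m = mu y"
      using eigpair_Rayleigh[OF \<open>eigpair N W m y\<close>] unfolding mu_def by simp
    ultimately show "eigpair N W (mu y) y" "mu y \<le> lam" by simp_all
  qed
  have inner_eig: "inner y y' = mu y * N y y'" if "y \<in> T" "y' \<in> T" for y y'
    using eig(1)[OF that(1)] eig(1)[OF that(2)] unfolding eigpair_def by blast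
  define s where "s y = sqrt (lam - mu y)" for y
  have weights: "(lam - mu y) * N y y' = s y * s y' * N y y'" if "y \<in> T" "y' \<in> T" for y y'
  proof (cases "mu y = mu y'")
    case True
    then show ?thesis using eig(2)[OF that(1)] unfolding s_def by simp
  next
    case False
    then show ?thesis using eigpair_N_orthogonal[OF eig(1)[OF that(1)] eig(1)[OF that(2)]] by simp
  qed
  define z where "z = (\<Sum>y\<in>T. (c y * s y) *\<^sub>R y)"
  have "lam * N v v - inner v v = (\<Sum>y\<in>T. \<Sum>y'\<in>T. c y * c y' * ((lam - mu y) * N y y'))"
    unfolding v bilinear_sum_scaleR[OF N_bilinear] bilinear_sum_scaleR[OF bilinear_inner]
    by (simp add: inner_eig sum_distrib_left sum_subtractf[symmetric] algebra_simps cong: sum.cong)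
  also have "\<dots> = N z z"
    unfolding z_def bilinear_sum_scaleR[OF N_bilinear]
  proof (intro sum.cong refl)
    fix y y' assume "y \<in> T" "y' \<in> T"
    then show "c y * c y' * ((lam - mu y) * N y y') = c y * s y * (c y' * s y') * N y y'"
      using weights[of y y'] by (simp only: mult_ac)
  qed
  finally show ?thesis using N_nonneg[of z] by simp
qed

lemma Rayleigh_max_eigen:
  assumes W: "subspace W" and x: "x \<in> W" "norm x = 1"
    and max: "\<And>u. u \<in> W \<Longrightarrow> N u u \<le> N x x * (norm u)\<^sup>2" and v: "v \<in> W"
  shows "N x v = N x x * inner x v"
proof -
  have "0 \<le> t * (2 * N x x * inner x v - 2 * N x v) + t\<^sup>2 * (N x x * (norm v)\<^sup>2 - N v v)" for t
  proof -
    have "N (x + t *\<^sub>R v) (x + t *\<^sub>R v) \<le> N x x * (norm (x + t *\<^sub>R v))\<^sup>2"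
      using max W x v by (simp add: subspace_add subspace_scale)
    moreover have "(norm (x + t *\<^sub>R v))\<^sup>2 = 1 + 2 * t * inner x v + t\<^sup>2 * (norm v)\<^sup>2"
    proof -
      have "inner x x = 1" using x(2) by (simp add: dot_square_norm)
      then show ?thesis
        by (simp only: power2_norm_eq_inner inner_add_left inner_add_right inner_scaleR_left
            inner_scaleR_right inner_commute[of v x]) (simp add: power2_eq_square algebra_simps)
    qed
    ultimately show ?thesis
      by (simp add: N_expand N_commute[of v x] power2_eq_square algebra_simps)
  qed
  from linear_coeff_zero_if_nonneg_quadratic[OF this] show ?thesis by simp
qed

lemma parallelogram_Rayleigh:
  assumes W: "subspace W" and bound: "\<And>u. u \<in> W \<Longrightarrow> N u u \<le> mu * (norm u)\<^sup>2"
    and a: "a \<in> W" "norm a = 1" and b: "b \<in> W" "norm b = 1"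
  shows "mu * (norm (a - b))\<^sup>2 \<le> N (a - b) (a - b) + 2 * (mu - N a a) + 2 * (mu - N b b)"
proof -
  have "N (a + b) (a + b) \<le> mu * (norm (a + b))\<^sup>2"
    using bound W a b by (simp add: subspace_add)
  moreover have "(norm (a - b))\<^sup>2 + (norm (a + b))\<^sup>2 = 4"
  proof -
    have "inner a a = 1" "inner b b = 1" using a b by (simp_all add: dot_square_norm)
    then show ?thesis
      by (simp add: power2_norm_eq_inner inner_diff inner_add inner_commute[of b a])
  qed
  then have "mu * (norm (a - b))\<^sup>2 + mu * (norm (a + b))\<^sup>2 = 4 * mu"
    by (metis distrib_left mult.commute)
  moreover have "N (a - b) (a - b) + N (a + b) (a + b) = 2 * N a a + 2 * N b b"
    by (simp add: N_expand N_commute[of b a])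
  ultimately show ?thesis by (smt (verit))
qed

text \<open>An eigenvector on the part of W orthogonal to the eigenvectors x i is one on all of W:
  the components along the x i contribute nothing to either side.\<close>

lemma eigvec_of_orthogonal_slice:
  fixes m :: nat
  assumes W: "subspace W"
    and x: "\<And>i. i < m \<Longrightarrow> x i \<in> W"
    and orthonormal: "\<And>i l. i < m \<Longrightarrow> l < m \<Longrightarrow> inner (x i) (x l) = (if i = l then 1 else 0)"
    and eig: "\<And>i v. i < m \<Longrightarrow> v \<in> W \<Longrightarrow> N (x i) v = mu i * inner (x i) v"
    and y: "y \<in> W" "\<And>i. i < m \<Longrightarrow> inner y (x i) = 0"
    and slice_eig: "\<And>w. w \<in> W \<Longrightarrow> \<forall>i<m. inner w (x i) = 0 \<Longrightarrow> N y w = c * inner y w"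
    and v: "v \<in> W"
  shows "N y v = c * inner y v"
proof -
  define w where "w = v - (\<Sum>i<m. inner v (x i) *\<^sub>R x i)"
  have "w \<in> W"
    unfolding w_def using W v x by (auto intro!: subspace_diff subspace_sum subspace_scale)
  moreover have "inner w (x l) = 0" if "l < m" for l
  proof -
    have "inner w (x l) = inner v (x l) - (\<Sum>i<m. inner v (x i) * inner (x i) (x l))"
      unfolding w_def by (simp add: inner_diff_left inner_sum_left)
    also have "(\<Sum>i<m. inner v (x i) * inner (x i) (x l)) = (\<Sum>i<m. if i = l then inner v (x l) else 0)"
      using orthonormal that by (intro sum.cong) auto
    also have "\<dots> = inner v (x l)" using that by simp
    finally show ?thesis by simp
  qed
  ultimately have "N y w = c * inner y w" using slice_eig by blast
  moreover have "N y (x i) = 0" if "i < m" for i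
    using eig[OF that y(1)] y(2)[OF that] by (simp add: N_commute inner_commute)
  ultimately show ?thesis
    unfolding w_def using y(2) by (simp add: N_expand inner_diff_right inner_sum_right)
qed

lemma Rayleigh_maximizers_eigpair:
  assumes "Rayleigh_maximizers N W x mu k" "j < k"
  shows "eigpair N W (1 / mu j) (x j)"
proof -
  have x: "x j \<in> W" "norm (x j) = 1" "0 < mu j" and eig: "\<forall>v\<in>W. N (x j) v = mu j * inner (x j) v"
    using assms unfolding Rayleigh_maximizers_def by auto
  have "x j \<in> kerperp N W"
    using x eig null_right unfolding kerperp_def kerN_def by force
  moreover have "inner (x j) v = 1 / mu j * N (x j) v" if "v \<in> kerperp N W" for v
    using x(3) eig that kerperp_subset by fastforce
  ultimately show ?thesis unfolding eigpair_def using x(2) by auto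
qed

lemma Rayleigh_maximizers_level:
  assumes "Rayleigh_maximizers N W x mu k" "\<And>j. j < k \<Longrightarrow> 1 / mu j \<le> lam"
  shows "dim_ge (span {u. \<exists>mu'\<le>lam. eigpair N W mu' u}) k"
proof -
  have "x ` {..<k} \<subseteq> span {u. \<exists>mu'\<le>lam. eigpair N W mu' u}"
    using Rayleigh_maximizers_eigpair[OF assms(1)] assms(2) by (auto intro!: span_base)
  then show ?thesis
    unfolding dim_ge_def using Rayleigh_maximizers_independent[OF assms(1)] by blast
qed

lemma eig_level_imp_Rayleigh_level:
  assumes W: "subspace W" and level: "dim_ge (span {u. \<exists>mu\<le>lam. eigpair N W mu u}) k"
  shows "Rayleigh_level N W k lam"
proof -
  let ?E = "{u. \<exists>mu\<le>lam. eigpair N W mu u}"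
  obtain B where B: "B \<subseteq> span ?E" "finite B" "card B = k" "independent B"
    using level unfolding dim_ge_def by blast
  have "?E \<subseteq> W" unfolding eigpair_def kerperp_def by auto
  then have "span ?E \<subseteq> W" using W by (rule span_minimal)
  moreover have "span B \<subseteq> span ?E" using B(1) by (rule span_minimal) simp
  ultimately show ?thesis
    unfolding Rayleigh_level_def using B span_superset Rayleigh_le_on_eigenspan
    by (metis (no_types, lifting) subsetD subset_trans)
qed

lemma Rayleigh_level_pos:
  assumes "Rayleigh_level N W k lam" "1 \<le> k"
  shows "0 < lam"
proof -
  obtain B where B: "finite B" "card B = k" "independent B"
    and bound: "\<forall>v\<in>span B. inner v v \<le> lam * N v v"
    using assms(1) unfolding Rayleigh_level_def by blast
  obtain b where "b \<in> B" using B(2) assms(2) by fastforce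
  then have "b \<noteq> 0" "inner b b \<le> lam * N b b"
    using B(3) bound dependent_zero span_base by blast+
  then show ?thesis using N_nonneg[of b] by (smt (verit) inner_gt_zero_iff mult_nonpos_nonneg)
qed

lemma projection_Rayleigh_bound:
  assumes lam: "0 < lam" "Ch\<^sup>2 * lam < 1" and ray: "inner u u \<le> lam * N u u"
    and approx: "seminormN N (u - v) \<le> Ch * norm (u - v)" and orth: "inner (u - v) v = 0"
  shows "(1 - Ch\<^sup>2 * lam) * inner v v \<le> lam * N v v" and "v = 0 \<Longrightarrow> u = 0"
proof -
  define b where "b = norm (u - v)"
  have pythagoras: "inner u u = inner v v + b\<^sup>2"
    using norm_add_Pythagorean[of "u - v" v] orth unfolding b_def orthogonal_def
    by (simp add: dot_square_norm)
  have "seminormN N u \<le> seminormN N v + Ch * b"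
    using seminormN_triangle[of v "u - v"] approx unfolding b_def by simp
  then have "(seminormN N u)\<^sup>2 \<le> (seminormN N v + Ch * b)\<^sup>2"
    by (rule power_mono) (simp add: seminormN_def N_nonneg)
  then have "lam * N u u \<le> lam * (seminormN N v + Ch * b)\<^sup>2"
    using lam(1) by (simp add: mult_left_mono)
  then have "inner u u \<le> lam * (seminormN N v + Ch * b)\<^sup>2"
    using ray by linarith
  then have le: "inner v v + b\<^sup>2 \<le> lam * (seminormN N v + Ch * b)\<^sup>2"
    by (simp only: pythagoras)
  show "(1 - Ch\<^sup>2 * lam) * inner v v \<le> lam * N v v"
    using completed_square_bound[OF lam(2) le] by simp
  show "u = 0" if "v = 0"
  proof -
    have "seminormN N v = 0" using that by (simp add: seminormN_def N_expand)
    then have "b\<^sup>2 \<le> lam * (Ch * b)\<^sup>2" using le that by simp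
    also have "\<dots> = (Ch\<^sup>2 * lam) * b\<^sup>2" by (simp add: power_mult_distrib)
    finally have "(1 - Ch\<^sup>2 * lam) * b\<^sup>2 \<le> 0" by (simp add: left_diff_distrib)
    then have "b = 0" using lam(2) by (simp add: mult_le_0_iff)
    then show ?thesis using that unfolding b_def by simp
  qed
qed

lemma Rayleigh_level_projection:
  assumes V: "subspace V" and Vh: "subspace Vh"
    and proj: "\<forall>u. Ph u \<in> Vh \<and> (\<forall>v\<in>Vh. inner (u - Ph u) v = 0)"
    and approx: "\<forall>u\<in>V. seminormN N (u - Ph u) \<le> Ch * norm (u - Ph u)"
    and lam: "0 < lam" "Ch\<^sup>2 * lam < 1" and level: "Rayleigh_level N V k lam"
  shows "Rayleigh_level N Vh k (lam / (1 - Ch\<^sup>2 * lam))"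
proof -
  obtain B where B: "B \<subseteq> V" "finite B" "card B = k" "independent B"
    and ray: "\<forall>v\<in>span B. inner v v \<le> lam * N v v"
    using level unfolding Rayleigh_level_def by blast
  have lin: "linear Ph" using orthogonal_projection_linear[OF Vh proj] .
  have u: "(1 - Ch\<^sup>2 * lam) * inner (Ph u) (Ph u) \<le> lam * N (Ph u) (Ph u)"
    "Ph u = 0 \<Longrightarrow> u = 0" if "u \<in> span B" for u
  proof -
    have "u \<in> V" using that span_minimal[OF B(1) V] by blast
    then show "(1 - Ch\<^sup>2 * lam) * inner (Ph u) (Ph u) \<le> lam * N (Ph u) (Ph u)"
      "Ph u = 0 \<Longrightarrow> u = 0"
      using projection_Rayleigh_bound[OF lam] ray that approx proj by blast+
  qed
  have inj: "inj_on Ph (span B)"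
    using u(2) by (simp add: linear_inj_on_iff_eq_0[OF lin subspace_span])
  show ?thesis
    unfolding Rayleigh_level_def
  proof (intro exI conjI)
    show "Ph ` B \<subseteq> Vh" "finite (Ph ` B)" using proj B(2) by auto
    show "card (Ph ` B) = k"
      using card_image[OF inj_on_subset[OF inj span_superset]] B(3) by simp
    show "independent (Ph ` B)"
      using linear_independent_injective_image[OF lin B(4) inj] .
    show "\<forall>v\<in>span (Ph ` B). inner v v \<le> lam / (1 - Ch\<^sup>2 * lam) * N v v"
      using u(1) lam(2) by (auto simp: span_linear_image[OF lin] le_divide_eq mult.commute)
  qed
qed

end

section \<open>Compact forms and the min-max principle\<close>

locale compact_form = psd_form N for N :: "'a::{real_inner, complete_space} \<Rightarrow> 'a \<Rightarrow> real" +
  assumes N_compact: "bounded (range (x :: nat \<Rightarrow> 'a)) \<Longrightarrow>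
    \<exists>r :: nat \<Rightarrow> nat. strict_mono r \<and> (\<forall>e>0. \<exists>K. \<forall>m\<ge>K. \<forall>n\<ge>K. seminormN N (x (r m) - x (r n)) < e)"
begin

lemma N_Cauchy_subseq:
  fixes x :: "nat \<Rightarrow> 'a"
  assumes "bounded (range x)"
  obtains r :: "nat \<Rightarrow> nat" where "strict_mono r"
    "\<And>e. 0 < e \<Longrightarrow> \<exists>K. \<forall>m\<ge>K. \<forall>n\<ge>K. N (x (r m) - x (r n)) (x (r m) - x (r n)) < e"
proof -
  obtain r :: "nat \<Rightarrow> nat" where r: "strict_mono r"
    and Cauchy: "\<forall>e>0. \<exists>K. \<forall>m\<ge>K. \<forall>n\<ge>K. seminormN N (x (r m) - x (r n)) < e"
    using N_compact[OF assms] by (elim exE conjE) auto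
  show thesis
  proof (rule that[OF r])
    fix e :: real assume "0 < e"
    then obtain K where "\<forall>m\<ge>K. \<forall>n\<ge>K. seminormN N (x (r m) - x (r n)) < sqrt e"
      using Cauchy real_sqrt_gt_zero by blast
    then show "\<exists>K. \<forall>m\<ge>K. \<forall>n\<ge>K. N (x (r m) - x (r n)) (x (r m) - x (r n)) < e"
      unfolding seminormN_def by auto
  qed
qed

text \<open>Otherwise unit vectors y n with N(y n, y n) > n would have a subsequence that is
  Cauchy, hence bounded, in the seminorm.\<close>

lemma quadratic_bound: "\<exists>C>0. \<forall>u. N u u \<le> C * (norm u)\<^sup>2"
proof (rule ccontr)
  assume unbounded: "\<not> ?thesis"
  have "\<exists>y. norm y = 1 \<and> real n < N y y" for n
  proof -
    have "0 < real n + 1" by simp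
    then obtain u where u: "(real n + 1) * (norm u)\<^sup>2 < N u u"
      using unbounded not_le by blast
    then have "u \<noteq> 0" by (auto simp: N_expand)
    moreover have "real n * (norm u)\<^sup>2 \<le> (real n + 1) * (norm u)\<^sup>2" by (simp add: mult_right_mono)
    ultimately have "real n * (norm u)\<^sup>2 < N u u" using u by linarith
    then have "real n < N u u / (norm u)\<^sup>2" using \<open>u \<noteq> 0\<close> by (simp add: pos_less_divide_eq)
    then show ?thesis using \<open>u \<noteq> 0\<close> by (intro exI[of _ "u /\<^sub>R norm u"]) (simp add: N_normalized)
  qed
  then obtain y where y: "\<And>n. norm (y n) = 1" "\<And>n. real n < N (y n) (y n)" by metis
  have "bounded (range y)" using y(1) by (auto simp: bounded_iff)
  from N_compact[OF this] obtain r :: "nat \<Rightarrow> nat" where r: "strict_mono r"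
    and Cauchy: "\<forall>e>0. \<exists>K. \<forall>m\<ge>K. \<forall>n\<ge>K. seminormN N (y (r m) - y (r n)) < e"
    by (elim exE conjE) auto
  obtain K where K: "\<forall>m\<ge>K. \<forall>n\<ge>K. seminormN N (y (r m) - y (r n)) < 1"
    using Cauchy[rule_format, OF zero_less_one] by blast
  define n where "n = max K (nat \<lceil>(1 + seminormN N (y (r K)))\<^sup>2\<rceil>)"
  have "seminormN N (y (r n)) \<le> seminormN N (y (r n) - y (r K)) + seminormN N (y (r K))"
    using seminormN_triangle[of "y (r n) - y (r K)" "y (r K)"] by simp
  also have "\<dots> < 1 + seminormN N (y (r K))"
    using K[rule_format, of n K] unfolding n_def by simp
  finally have "(seminormN N (y (r n)))\<^sup>2 < (1 + seminormN N (y (r K)))\<^sup>2"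
    by (rule power_strict_mono) (simp_all add: seminormN_def N_nonneg)
  then have "N (y (r n)) (y (r n)) < (1 + seminormN N (y (r K)))\<^sup>2" by simp
  also have "\<dots> \<le> real n" unfolding n_def by linarith
  also have "\<dots> \<le> real (r n)" using seq_suble[OF r] by simp
  finally show False using y(2)[of "r n"] by simp
qed

lemma bounded_bilinear_N: "bounded_bilinear N"
proof -
  obtain C where C: "0 < C" "\<And>u. N u u \<le> C * (norm u)\<^sup>2" using quadratic_bound by blast
  have "seminormN N u \<le> sqrt C * norm u" for u
  proof -
    have "sqrt (N u u) \<le> sqrt (C * (norm u)\<^sup>2)" using C(2) by (rule real_sqrt_le_mono)
    then show ?thesis unfolding seminormN_def by (simp add: real_sqrt_mult)
  qed
  then have "\<bar>N a b\<bar> \<le> norm a * norm b * C" for a b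
  proof -
    have "\<bar>N a b\<bar> \<le> seminormN N a * seminormN N b" by (rule abs_N_le)
    also have "\<dots> \<le> (sqrt C * norm a) * (sqrt C * norm b)"
      using \<open>\<And>u. seminormN N u \<le> sqrt C * norm u\<close> C(1) by (intro mult_mono) (auto simp: seminormN_def N_nonneg)
    also have "\<dots> = norm a * norm b * C" using C(1) by (simp add: algebra_simps)
    finally show ?thesis .
  qed
  then show ?thesis
    by (intro bounded_bilinear.intro) (auto simp: N_expand intro: exI[of _ C])
qed

lemma maximizing_sequence:
  assumes W: "subspace W" and u0: "u0 \<in> W" "0 < N u0 u0"
  obtains mu y where "0 < mu" "\<And>u. u \<in> W \<Longrightarrow> N u u \<le> mu * (norm u)\<^sup>2"
    "\<And>n. y n \<in> W" "\<And>n. norm (y n) = 1" "(\<lambda>n. N (y n) (y n)) \<longlonglongrightarrow> mu"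
proof -
  obtain C where C: "\<And>u. N u u \<le> C * (norm u)\<^sup>2" using quadratic_bound by blast
  define S where "S = {N u u | u. u \<in> W \<and> norm u = 1}"
  have quotient_in_S: "N u u / (norm u)\<^sup>2 \<in> S" if "u \<in> W" "u \<noteq> 0" for u
  proof -
    have "u /\<^sub>R norm u \<in> W" using W that(1) by (simp add: subspace_scale)
    then show ?thesis unfolding S_def using that(2) N_normalized[of u] by force
  qed
  have u0_nonzero: "u0 \<noteq> 0" using u0(2) by (auto simp: N_expand)
  have "N u u \<le> C" if "norm u = 1" for u using C[of u] that by simp
  then have S_bdd: "bdd_above S" unfolding S_def by (auto intro!: bdd_aboveI[of _ C])
  have S_ne: "S \<noteq> {}" using quotient_in_S[OF u0(1) u0_nonzero] by blast
  have bound: "N u u \<le> Sup S * (norm u)\<^sup>2" if "u \<in> W" for u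
  proof (cases "u = 0")
    case True then show ?thesis by (simp add: N_expand)
  next
    case False
    then have "N u u / (norm u)\<^sup>2 \<le> Sup S" using cSup_upper[OF quotient_in_S[OF that] S_bdd] by simp
    then show ?thesis using False by (simp add: divide_le_eq mult.commute)
  qed
  have "0 < N u0 u0 / (norm u0)\<^sup>2" using u0(2) u0_nonzero by simp
  then have pos: "0 < Sup S" using cSup_upper[OF quotient_in_S[OF u0(1) u0_nonzero] S_bdd] by linarith
  have "\<exists>y. y \<in> W \<and> norm y = 1 \<and> Sup S - 1 / Suc n < N y y" for n
  proof -
    obtain s where "s \<in> S" "Sup S - 1 / Suc n < s"
      using less_cSup_iff[OF S_ne S_bdd, of "Sup S - 1 / Suc n"] by auto
    then show ?thesis unfolding S_def by auto
  qed
  then obtain y where y: "\<And>n. y n \<in> W" "\<And>n. norm (y n) = 1" "\<And>n. Sup S - 1 / Suc n < N (y n) (y n)"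
    by metis
  have "(\<lambda>n. Sup S - 1 / Suc n) \<longlonglongrightarrow> Sup S - 0"
    by (intro tendsto_diff tendsto_const LIMSEQ_Suc[OF lim_const_over_n])
  then have lim: "(\<lambda>n. Sup S - 1 / Suc n) \<longlonglongrightarrow> Sup S" by simp
  have "(\<lambda>n. N (y n) (y n)) \<longlonglongrightarrow> Sup S"
  proof (rule tendsto_sandwich[OF _ _ lim tendsto_const])
    show "\<forall>\<^sub>F n in sequentially. Sup S - 1 / Suc n \<le> N (y n) (y n)"
      using y(3) by (intro always_eventually allI less_imp_le)
    show "\<forall>\<^sub>F n in sequentially. N (y n) (y n) \<le> Sup S"
      using bound[OF y(1)] y(2) by (intro always_eventually allI) simp
  qed
  then show thesis using that pos bound y(1,2) by blast
qed

lemma maximizing_sequence_Cauchy: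
  assumes W: "subspace W" and mu: "0 < mu" "\<And>u. u \<in> W \<Longrightarrow> N u u \<le> mu * (norm u)\<^sup>2"
    and z: "\<And>n. z n \<in> W" "\<And>n. norm (z n) = 1" "(\<lambda>n. N (z n) (z n)) \<longlonglongrightarrow> mu"
    and N_Cauchy: "\<And>e. 0 < e \<Longrightarrow> \<exists>K. \<forall>m\<ge>K. \<forall>n\<ge>K. N (z m - z n) (z m - z n) < e"
  shows "Cauchy z"
  unfolding Cauchy_def
proof (intro allI impI)
  fix e :: real assume e: "0 < e"
  define d where "d = mu * e\<^sup>2 / 5"
  have d: "0 < d" unfolding d_def using mu(1) e by simp
  obtain K1 where K1: "\<forall>m\<ge>K1. \<forall>n\<ge>K1. N (z m - z n) (z m - z n) < d"
    using N_Cauchy[OF d] by blast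
  obtain K2 where K2: "\<forall>n\<ge>K2. norm (N (z n) (z n) - mu) < d / 4"
    using LIMSEQ_D[OF z(3)] d by (metis zero_less_divide_iff zero_less_numeral)
  show "\<exists>M. \<forall>m\<ge>M. \<forall>n\<ge>M. dist (z m) (z n) < e"
  proof (intro exI allI impI)
    fix m n assume mn: "max K1 K2 \<le> m" "max K1 K2 \<le> n"
    have "mu * (norm (z m - z n))\<^sup>2 \<le> N (z m - z n) (z m - z n) + 2 * (mu - N (z m) (z m))
        + 2 * (mu - N (z n) (z n))"
      using parallelogram_Rayleigh[OF W mu(2)] z by blast
    also have "\<dots> < d + 2 * (d / 4) + 2 * (d / 4)"
      using K1 K2 mn by (smt (verit, best) max.boundedE real_norm_def)
    also have "\<dots> < mu * e\<^sup>2" unfolding d_def using mu(1) e by simp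
    finally have "(norm (z m - z n))\<^sup>2 < e\<^sup>2" using mu(1) by simp
    then show "dist (z m) (z n) < e" using e by (simp add: dist_norm power_less_imp_less_base)
  qed
qed

lemma Rayleigh_max_exists:
  assumes W: "subspace W" "closed W" and u0: "u0 \<in> W" "0 < N u0 u0"
  obtains x where "x \<in> W" "norm x = 1" "0 < N x x" "\<And>u. u \<in> W \<Longrightarrow> N u u \<le> N x x * (norm u)\<^sup>2"
proof -
  obtain mu y where mu: "0 < mu" "\<And>u. u \<in> W \<Longrightarrow> N u u \<le> mu * (norm u)\<^sup>2"
    and y: "\<And>n. y n \<in> W" "\<And>n. norm (y n) = 1" "(\<lambda>n. N (y n) (y n)) \<longlonglongrightarrow> mu"
    using maximizing_sequence[OF W(1) u0] by blast
  have "bounded (range y)" using y(2) by (auto simp: bounded_iff)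
  then obtain r :: "nat \<Rightarrow> nat" where r: "strict_mono r"
    and N_Cauchy: "\<And>e. 0 < e \<Longrightarrow> \<exists>K. \<forall>m\<ge>K. \<forall>n\<ge>K. N (y (r m) - y (r n)) (y (r m) - y (r n)) < e"
    by (rule N_Cauchy_subseq) blast+
  define z where "z = y \<circ> r"
  have z: "\<And>n. z n \<in> W" "\<And>n. norm (z n) = 1" "(\<lambda>n. N (z n) (z n)) \<longlonglongrightarrow> mu"
    using y LIMSEQ_subseq_LIMSEQ[OF y(3) r] unfolding z_def by (auto simp: comp_def)
  have "Cauchy z"
    using maximizing_sequence_Cauchy[OF W(1) mu z] N_Cauchy unfolding z_def by (simp add: comp_def)
  then obtain x where zx: "z \<longlonglongrightarrow> x" using Cauchy_convergent_iff convergent_def by blast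
  have "x \<in> W" using closed_sequentially[OF W(2) _ zx] z(1) by blast
  moreover have "norm x = 1"
    using tendsto_norm[OF zx] z(2) by (simp add: LIMSEQ_const_iff)
  moreover have "N x x = mu"
    using LIMSEQ_unique[OF bounded_bilinear.tendsto[OF bounded_bilinear_N zx zx] z(3)] .
  ultimately show thesis using that mu by simp
qed

lemma next_Rayleigh_maximizer:
  assumes W: "subspace W" "closed W" and dim: "dim_ge (kerperp N W) k" and m: "m < k"
    and IH: "Rayleigh_maximizers N W x mu m"
  obtains y where "y \<in> W" "norm y = 1" "0 < N y y" "\<forall>i<m. inner y (x i) = 0"
    "\<forall>v\<in>W. N y v = N y y * inner y v"
    "\<forall>w\<in>W. (\<forall>i<m. inner w (x i) = 0) \<longrightarrow> N w w \<le> N y y * (norm w)\<^sup>2"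
proof -
  define S where "S = {w \<in> W. \<forall>i<m. inner w (x i) = 0}"
  have S: "subspace S" "closed S" unfolding S_def using orthogonal_slice[OF W] by blast+
  obtain B where B: "B \<subseteq> kerperp N W" "finite B" "card B = k" "independent B"
    using dim unfolding dim_ge_def by blast
  obtain u where u: "u \<in> span B" "u \<noteq> 0" "\<And>i. i < m \<Longrightarrow> inner u (x i) = 0"
    using exists_orthogonal_in_span[OF B(4,2,3) m, of x] by blast
  have "u \<in> kerperp N W" using span_minimal[OF B(1) kerperp_subspace[OF W(1)]] u(1) by blast
  then have "u \<in> S" "0 < N u u"
    using u kerperp_pos kerperp_subset unfolding S_def by blast+
  then obtain y where y: "y \<in> S" "norm y = 1" "0 < N y y"
    and max: "\<And>w. w \<in> S \<Longrightarrow> N w w \<le> N y y * (norm w)\<^sup>2"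
    using Rayleigh_max_exists[OF S] by blast
  have "N y v = N y y * inner y v" if "v \<in> W" for v
  proof (rule eigvec_of_orthogonal_slice[OF W(1) _ _ _ _ _ _ that])
    show "\<And>w. w \<in> W \<Longrightarrow> \<forall>i<m. inner w (x i) = 0 \<Longrightarrow> N y w = N y y * inner y w"
      using Rayleigh_max_eigen[OF S(1) y(1,2) max] unfolding S_def by blast
  qed (use IH Rayleigh_maximizers_orthonormal[OF IH] y(1) in
      \<open>auto simp: Rayleigh_maximizers_def S_def\<close>)
  then show thesis using that y max unfolding S_def by blast
qed

lemma Rayleigh_maximizers_exist:
  assumes W: "subspace W" "closed W" and dim: "dim_ge (kerperp N W) k"
  obtains x mu where "Rayleigh_maximizers N W x mu k"
proof -
  have "m \<le> k \<Longrightarrow> \<exists>x mu. Rayleigh_maximizers N W x mu m" for m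
  proof (induction m)
    case 0
    show ?case by simp
  next
    case (Suc m)
    then obtain x mu where IH: "Rayleigh_maximizers N W x mu m" by auto
    obtain y where "y \<in> W" "norm y = 1" "0 < N y y" "\<forall>i<m. inner y (x i) = 0"
      "\<forall>v\<in>W. N y v = N y y * inner y v"
      "\<forall>w\<in>W. (\<forall>i<m. inner w (x i) = 0) \<longrightarrow> N w w \<le> N y y * (norm w)\<^sup>2"
      using next_Rayleigh_maximizer[OF W dim _ IH] Suc.prems by (metis Suc_le_lessD)
    from Rayleigh_maximizers_extend[OF IH this] show ?case by blast
  qed
  then show thesis using that by blast
qed

lemma Rayleigh_level_imp_eig_level:
  assumes W: "subspace W" "closed W" "dim_ge (kerperp N W) k" and level: "Rayleigh_level N W k lam"
  shows "dim_ge (span {u. \<exists>mu\<le>lam. eigpair N W mu u}) k"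
proof -
  obtain x mu where max: "Rayleigh_maximizers N W x mu k"
    using Rayleigh_maximizers_exist[OF W] .
  obtain B where B: "B \<subseteq> W" "finite B" "card B = k" "independent B"
    and ray: "\<forall>v\<in>span B. inner v v \<le> lam * N v v"
    using level unfolding Rayleigh_level_def by blast
  have "1 / mu j \<le> lam" if j: "j < k" for j
  proof -
    obtain u where u: "u \<in> span B" "u \<noteq> 0" "\<And>i. i < j \<Longrightarrow> inner u (x i) = 0"
      using exists_orthogonal_in_span[OF B(4,2,3) j, of x] by blast
    have mu_j: "0 < mu j"
      and max_j: "\<forall>w\<in>W. (\<forall>i<j. inner w (x i) = 0) \<longrightarrow> N w w \<le> mu j * (norm w)\<^sup>2"
      using max j unfolding Rayleigh_maximizers_def by blast+
    have "u \<in> W" using span_minimal[OF B(1) W(1)] u(1) by blast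
    have "0 < lam" using Rayleigh_level_pos[OF level] j by simp
    have "(norm u)\<^sup>2 \<le> lam * N u u" using ray u(1) by (simp add: power2_norm_eq_inner)
    also have "\<dots> \<le> lam * (mu j * (norm u)\<^sup>2)"
      using max_j \<open>u \<in> W\<close> u(3) \<open>0 < lam\<close> by (simp add: mult_left_mono)
    finally have "1 * (norm u)\<^sup>2 \<le> (lam * mu j) * (norm u)\<^sup>2" by (simp add: mult.assoc)
    then have "1 \<le> lam * mu j" using u(2) by (simp only: mult_le_cancel_right) simp
    then show ?thesis using mu_j by (simp add: divide_le_eq)
  qed
  then show ?thesis using Rayleigh_maximizers_level[OF max] by blast
qed

lemma Rayleigh_level_exists:
  assumes W: "subspace W" "closed W" "dim_ge (kerperp N W) k"
  shows "\<exists>lam. Rayleigh_level N W k lam"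
proof -
  obtain x mu where max: "Rayleigh_maximizers N W x mu k"
    using Rayleigh_maximizers_exist[OF W] .
  have "0 < mu i" if "i < k" for i using max that unfolding Rayleigh_maximizers_def by blast
  then have "1 / mu j \<le> (\<Sum>i<k. 1 / mu i)" if "j < k" for j
    using that by (intro member_le_sum) (auto intro: less_imp_le)
  then show ?thesis
    using eig_level_imp_Rayleigh_level[OF W(1) Rayleigh_maximizers_level[OF max]] by blast
qed

theorem eigval_minmax:
  assumes "subspace W" "closed W" "dim_ge (kerperp N W) k"
  shows "eigval N W k = Inf {lam. Rayleigh_level N W k lam}"
proof -
  have "{lam. dim_ge (span {u. \<exists>mu\<le>lam. eigpair N W mu u}) k} = {lam. Rayleigh_level N W k lam}"
    using eig_level_imp_Rayleigh_level[OF assms(1)] Rayleigh_level_imp_eig_level[OF assms] by blast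
  then show ?thesis unfolding eigval_def by simp
qed

end


theorem theorem2p4:
  fixes N :: "'a::{real_inner, complete_space} \<Rightarrow> 'a \<Rightarrow> real"
    and V Vh :: "'a set" and Ph :: "'a \<Rightarrow> 'a" and Ch :: real and k :: nat
  assumes N_bilinear: "bilinear N"
    and N_sym: "\<forall>u v. N u v = N v u"
    and N_psd: "\<forall>u. N u u \<ge> 0"
    and N_compact: "\<forall>x :: nat \<Rightarrow> 'a. bounded (range x) \<longrightarrow>
          (\<exists>r :: nat \<Rightarrow> nat. strict_mono r \<and> (\<forall>e>0. \<exists>K. \<forall>m\<ge>K. \<forall>n\<ge>K.
               seminormN N (x (r m) - x (r n)) < e))"
    and V_sub: "subspace V" and V_closed: "closed V"
    and Vh_sub: "subspace Vh" and Vh_closed: "closed Vh"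
    and Vh_fin: "\<exists>B. finite B \<and> Vh = span B"
    and Ph_proj: "\<forall>u. Ph u \<in> Vh \<and> (\<forall>v \<in> Vh. inner (u - Ph u) v = 0)"
    and Ch_pos: "Ch > 0"
    and approx: "\<forall>u \<in> V. seminormN N (u - Ph u) \<le> Ch * norm (u - Ph u)"
    and k_pos: "1 \<le> k"
    and k_le_n: "dim_ge (kerperp N Vh) k"
    and k_le_d: "dim_ge (kerperp N V) k"
  shows "eigval N V k \<ge> eigval N Vh k / (1 + Ch\<^sup>2 * eigval N Vh k)"
proof -
  interpret compact_form N
    using N_bilinear N_sym N_psd N_compact by unfold_locales auto
  have "eigval N Vh k / (1 + Ch\<^sup>2 * eigval N Vh k) \<le> eigval N V k"
    unfolding eigval_minmax[OF V_sub V_closed k_le_d] eigval_minmax[OF Vh_sub Vh_closed k_le_n]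
  proof (rule Inf_frac_le_Inf)
    show "{lam. Rayleigh_level N V k lam} \<noteq> {}"
      using Rayleigh_level_exists[OF V_sub V_closed k_le_d] by blast
    show "{lam. Rayleigh_level N Vh k lam} \<noteq> {}"
      using Rayleigh_level_exists[OF Vh_sub Vh_closed k_le_n] by blast
    show "0 \<le> b" if "b \<in> {lam. Rayleigh_level N Vh k lam}" for b
      using Rayleigh_level_pos[OF _ k_pos] that by (simp add: less_imp_le)
    show "0 < Ch\<^sup>2" using Ch_pos by simp
    show "lam / (1 - Ch\<^sup>2 * lam) \<in> {lam. Rayleigh_level N Vh k lam}"
      if "lam \<in> {lam. Rayleigh_level N V k lam}" "Ch\<^sup>2 * lam < 1" for lam
      using Rayleigh_level_projection[OF V_sub Vh_sub Ph_proj approx _ that(2)]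
        Rayleigh_level_pos[OF _ k_pos] that(1) by simp
  qed
  then show ?thesis by simp
qed

end
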